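(* Let $x_1,\dots,x_N\in\mathbb{R}^M$, let $w_1,\dots,w_N\ge0$, and fix $\Sigma\in\mathbb{R}^{M\times M}$ symmetric positive definite. Let $f(x\mid\mu,\Sigma)$ be the $\mathcal{N}(\mu,\Sigma)$ density and define $$L(\mu)=-\sum_{k=1}^N w_k\prod_{n=k}^N f(x_n\mid\mu,\Sigma),\qquad v_k(\mu)=\sum_{n=k}^N(x_n-\mu).$$ If $\mu\in\mathbb{R}^M$ satisfies $\Sigma\succeq \frac{v_k(\mu)v_k(\mu)^\top}{N-k+1}$ for all $k=1,\dots,N$, then the Hessian $\nabla^2 L(\mu)$ is positive semidefinite.
   Context: In the application $w_k=\pi(k)\prod_{n=1}^{k-1}g(x_n)$ with $\pi$ a prior on the outage time and $g$ the pre-outage density, so that $L$ is the negative (marginal) likelihood of the post-outage parameters. $A\succeq B$ means $A-B$ is positive semidefinite. *)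

theory Defs
  imports "HOL-Analysis.Analysis"
begin

definition psd :: "real^'m^'m \<Rightarrow> bool" where
  "psd A \<longleftrightarrow> (\<forall>v. v \<bullet> (A *v v) \<ge> 0)"

definition spd :: "real^'m^'m \<Rightarrow> bool" where
  "spd A \<longleftrightarrow> transpose A = A \<and> (\<forall>v. v \<noteq> 0 \<longrightarrow> v \<bullet> (A *v v) > 0)"

definition outer :: "real^'m \<Rightarrow> real^'m \<Rightarrow> real^'m^'m" where
  "outer u v = (\<chi> i j. u $ i * v $ j)"

definition gauss_density :: "real^'m \<Rightarrow> real^'m \<Rightarrow> real^'m^'m \<Rightarrow> real" where
  "gauss_density x mu S =
     (2 * pi) powr (- real CARD('m) / 2) * (det S) powr (-1/2) *
     exp (- (1/2) * ((x - mu) \<bullet> (matrix_inv S *v (x - mu))))"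

definition is_hessian :: "(real^'m \<Rightarrow> real) \<Rightarrow> real^'m \<Rightarrow> real^'m^'m \<Rightarrow> bool" where
  "is_hessian f x H \<longleftrightarrow> (\<exists>G. (\<forall>y. (f has_derivative (\<lambda>h. G y \<bullet> h)) (at y)) \<and>
                              (G has_derivative (\<lambda>h. H *v h)) (at x))"

definition negloglik :: "nat \<Rightarrow> (nat \<Rightarrow> real^'m) \<Rightarrow> (nat \<Rightarrow> real) \<Rightarrow> real^'m^'m \<Rightarrow> real^'m \<Rightarrow> real" where
  "negloglik N x w S mu = - (\<Sum>k=1..N. w k * (\<Prod>n=k..N. gauss_density (x n) mu S))"

definition vsum :: "nat \<Rightarrow> (nat \<Rightarrow> real^'m) \<Rightarrow> nat \<Rightarrow> real^'m \<Rightarrow> real^'m" where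
  "vsum N x k mu = (\<Sum>n=k..N. (x n - mu))"

end

theory Submission
  imports Defs
begin

(*
  Write P = S^-1 and v_k = v_k(mu). Each term g_k = prod_{n>=k} f(x_n | mu, S) is a constant
  times exp(-1/2 sum_{n>=k} (x_n - mu)^T P (x_n - mu)), so grad g_k = g_k P v_k and
  hess g_k = g_k (P v_k v_k^T P - (N-k+1) P).  Hence hess L(mu) = sum_k w_k g_k ((N-k+1) P - P v_k v_k^T P),
  and each bracket is positive semidefinite, being the congruence by P of
  (N-k+1) (S - v_k v_k^T / (N-k+1)).
*)

lemma matrix_vector_mult_sum:
  fixes A :: "'k \<Rightarrow> real^'n^'m"
  shows "(\<Sum>k\<in>K. A k) *v h = (\<Sum>k\<in>K. A k *v h)"
  by (induction K rule: infinite_finite_induct) (simp_all add: matrix_vector_mult_add_rdistrib)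

lemma outer_mult_vector: "outer u v *v h = (v \<bullet> h) *\<^sub>R (u::real^'m)"
  by (simp add: vec_eq_iff outer_def matrix_vector_mult_def inner_vec_def sum_distrib_left mult_ac)

lemma inner_matrix_vector_mult_symmetric:
  fixes A :: "real^'m^'m"
  assumes "transpose A = A"
  shows "u \<bullet> (A *v v) = (A *v u) \<bullet> v"
  by (metis assms dot_lmul_matrix transpose_transpose vector_transpose_matrix)

lemma spd_matrix_inv:
  fixes S :: "real^'m^'m"
  assumes "spd S"
  shows "S ** matrix_inv S = mat 1" and "transpose (matrix_inv S) = matrix_inv S"
proof -
  have "\<forall>v. S *v v = 0 \<longrightarrow> v = 0"
    using assms unfolding spd_def by (metis inner_zero_right less_irrefl)
  then obtain B where "B ** S = mat 1" using matrix_left_invertible_ker by blast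
  then have "\<exists>B. S ** B = mat 1 \<and> B ** S = mat 1" using matrix_left_right_inverse by blast
  then have inv: "S ** matrix_inv S = mat 1" "matrix_inv S ** S = mat 1"
    unfolding matrix_inv_def by (metis (mono_tags, lifting) someI_ex)+
  then show "S ** matrix_inv S = mat 1" by simp
  have "transpose (matrix_inv S) ** S = mat 1"
    using assms inv(1) unfolding spd_def by (metis matrix_transpose_mul transpose_mat)
  then have "transpose (matrix_inv S) = transpose (matrix_inv S) ** (S ** matrix_inv S)"
    using inv(1) by (simp add: matrix_mul_rid)
  also have "\<dots> = matrix_inv S"
    by (simp add: matrix_mul_assoc \<open>transpose (matrix_inv S) ** S = mat 1\<close> matrix_mul_lid)
  finally show "transpose (matrix_inv S) = matrix_inv S" .
qed

lemma psd_scaleR: "c \<ge> 0 \<Longrightarrow> psd A \<Longrightarrow> psd (c *\<^sub>R A)"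
  unfolding psd_def by (simp add: scaleR_matrix_vector_assoc[symmetric])

lemma psd_sum:
  assumes "\<And>k. k \<in> K \<Longrightarrow> psd (A k)"
  shows "psd (\<Sum>k\<in>K. A k)"
  using assms unfolding psd_def by (simp add: matrix_vector_mult_sum inner_sum_right sum_nonneg)

text \<open>Evaluating the hypothesis at y = S\<inverse>z is the congruence by S\<inverse>.\<close>

lemma psd_inverse_minus_outer:
  fixes S :: "real^'m^'m"
  assumes "spd S" and "psd (S - (1 / m) *\<^sub>R outer v v)" and "m > 0"
  shows "psd (m *\<^sub>R matrix_inv S - outer (matrix_inv S *v v) (matrix_inv S *v v))"
  unfolding psd_def
proof
  fix z
  define P where "P = matrix_inv S"
  note inv = spd_matrix_inv[OF assms(1), folded P_def]
  define y where "y = P *v z"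
  have Sy: "S *v y = z"
    unfolding y_def by (simp add: matrix_vector_mul_assoc inv)
  have "0 \<le> y \<bullet> ((S - (1 / m) *\<^sub>R outer v v) *v y)"
    using assms(2) psd_def by blast
  also have "\<dots> = z \<bullet> (P *v z) - (1 / m) * ((P *v v) \<bullet> z)\<^sup>2"
    using Sy inner_matrix_vector_mult_symmetric[OF inv(2), of v z]
    by (simp add: y_def matrix_vector_mult_diff_rdistrib scaleR_matrix_vector_assoc[symmetric]
        outer_mult_vector inner_diff_right inner_commute power2_eq_square)
  finally have "((P *v v) \<bullet> z)\<^sup>2 \<le> m * (z \<bullet> (P *v z))"
    using assms(3) by (simp add: field_simps)
  then show "0 \<le> z \<bullet> ((m *\<^sub>R P - outer (P *v v) (P *v v)) *v z)"
    by (simp add: matrix_vector_mult_diff_rdistrib scaleR_matrix_vector_assoc[symmetric]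
        outer_mult_vector inner_diff_right inner_commute power2_eq_square)
qed

lemma uminus_matrix_vector_mult: "(- A) *v h = - (A *v (h::real^'n))"
  for A :: "real^'n^'m"
  by (simp add: vec_eq_iff matrix_vector_mult_def sum_negf)

lemma is_hessian_uminus:
  assumes "is_hessian f x H"
  shows "is_hessian (\<lambda>y. - f y) x (- H)"
proof -
  obtain G where "\<And>y. (f has_derivative (\<lambda>h. G y \<bullet> h)) (at y)"
    and "(G has_derivative (\<lambda>h. H *v h)) (at x)"
    using assms unfolding is_hessian_def by blast
  then have "\<And>y. ((\<lambda>y. - f y) has_derivative (\<lambda>h. (- G y) \<bullet> h)) (at y)"
    and "((\<lambda>y. - G y) has_derivative (\<lambda>h. (- H) *v h)) (at x)"
    by (auto simp: uminus_matrix_vector_mult intro: has_derivative_minus)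
  then show ?thesis unfolding is_hessian_def by (intro exI[of _ "\<lambda>y. - G y"]) blast
qed

lemma is_hessian_scale:
  assumes "is_hessian f x H"
  shows "is_hessian (\<lambda>y. c * f y) x (c *\<^sub>R H)"
proof -
  obtain G where "\<And>y. (f has_derivative (\<lambda>h. G y \<bullet> h)) (at y)"
    and "(G has_derivative (\<lambda>h. H *v h)) (at x)"
    using assms unfolding is_hessian_def by blast
  then have "\<And>y. ((\<lambda>y. c * f y) has_derivative (\<lambda>h. (c *\<^sub>R G y) \<bullet> h)) (at y)"
    and "((\<lambda>y. c *\<^sub>R G y) has_derivative (\<lambda>h. (c *\<^sub>R H) *v h)) (at x)"
    by (auto simp: scaleR_matrix_vector_assoc[symmetric]
        intro: has_derivative_mult_right has_derivative_scaleR_right)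
  then show ?thesis unfolding is_hessian_def by (intro exI[of _ "\<lambda>y. c *\<^sub>R G y"]) blast
qed

lemma is_hessian_sum:
  assumes "\<And>k. k \<in> K \<Longrightarrow> is_hessian (f k) x (H k)"
  shows "is_hessian (\<lambda>y. \<Sum>k\<in>K. f k y) x (\<Sum>k\<in>K. H k)"
proof -
  obtain G where "\<And>k y. k \<in> K \<Longrightarrow> (f k has_derivative (\<lambda>h. G k y \<bullet> h)) (at y)"
    and "\<And>k. k \<in> K \<Longrightarrow> (G k has_derivative (\<lambda>h. H k *v h)) (at x)"
    using assms unfolding is_hessian_def by metis
  then have "\<And>y. ((\<lambda>y. \<Sum>k\<in>K. f k y) has_derivative (\<lambda>h. (\<Sum>k\<in>K. G k y) \<bullet> h)) (at y)"
    and "((\<lambda>y. \<Sum>k\<in>K. G k y) has_derivative (\<lambda>h. (\<Sum>k\<in>K. H k) *v h)) (at x)"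
    by (auto simp: inner_sum_left matrix_vector_mult_sum intro: has_derivative_sum)
  then show ?thesis
    unfolding is_hessian_def by (intro exI[of _ "\<lambda>y. \<Sum>k\<in>K. G k y"]) blast
qed

lemma has_derivative_quadratic_form:
  fixes P :: "real^'m^'m"
  assumes "transpose P = P"
  shows "((\<lambda>y. (a - y) \<bullet> (P *v (a - y))) has_derivative (\<lambda>h. -2 * ((P *v (a - y)) \<bullet> h))) (at y)"
proof -
  have "((\<lambda>y. (a - y) \<bullet> (P *v (a - y))) has_derivative
      (\<lambda>h. (- h) \<bullet> (P *v (a - y)) + (a - y) \<bullet> (P *v (- h)))) (at y)"
  proof -
    have "((\<lambda>y. a - y) has_derivative (\<lambda>h. - h)) (at y)"
      by (auto intro!: derivative_eq_intros)
    from has_derivative_inner[OF this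
        bounded_linear.has_derivative[OF matrix_vector_mul_bounded_linear this]]
    show ?thesis by simp
  qed
  moreover have "(a - y) \<bullet> (P *v (- h)) = (P *v (a - y)) \<bullet> (- h)" for h
    by (rule inner_matrix_vector_mult_symmetric[OF assms])
  ultimately show ?thesis by (simp add: inner_commute)
qed

lemma prod_gauss_density_eq:
  "(\<Prod>n\<in>A. gauss_density (x n) y S) =
     ((2 * pi) powr (- real CARD('m) / 2) * (det S) powr (-1/2)) ^ card A *
     exp (- (1/2) * (\<Sum>n\<in>A. (x n - y) \<bullet> (matrix_inv S *v (x n - y))))"
  for S :: "real^'m^'m"
  by (cases "finite A")
    (simp_all add: gauss_density_def prod.distrib exp_sum[symmetric] sum_distrib_left)

lemma has_derivative_prod_gauss_density:
  fixes S :: "real^'m^'m"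
  assumes "transpose (matrix_inv S) = matrix_inv S"
  shows "((\<lambda>y. \<Prod>n\<in>A. gauss_density (x n) y S) has_derivative
     (\<lambda>h. (\<Prod>n\<in>A. gauss_density (x n) y S) * ((matrix_inv S *v (\<Sum>n\<in>A. x n - y)) \<bullet> h))) (at y)"
proof -
  have "((\<lambda>y. \<Sum>n\<in>A. (x n - y) \<bullet> (matrix_inv S *v (x n - y))) has_derivative
      (\<lambda>h. -2 * ((matrix_inv S *v (\<Sum>n\<in>A. x n - y)) \<bullet> h))) (at y)"
    using has_derivative_sum[OF has_derivative_quadratic_form[OF assms]]
    by (simp add: vec.sum inner_sum_left sum_distrib_left)
  from has_derivative_mult_right[OF has_derivative_exp[OF has_derivative_mult_right[OF this,
          where x = "- (1/2)"]], where x = "((2 * pi) powr (- real CARD('m) / 2) * (det S) powr (-1/2)) ^ card A"]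
  show ?thesis
    unfolding prod_gauss_density_eq by (simp add: ac_simps)
qed

lemma is_hessian_prod_gauss_density:
  fixes S :: "real^'m^'m" and x :: "'a \<Rightarrow> real^'m" and A :: "'a set"
  assumes "transpose (matrix_inv S) = matrix_inv S"
  defines "g \<equiv> \<lambda>y. \<Prod>n\<in>A. gauss_density (x n) y S"
    and "u \<equiv> \<lambda>y. matrix_inv S *v (\<Sum>n\<in>A. x n - y)"
  shows "is_hessian g y (g y *\<^sub>R (outer (u y) (u y) - real (card A) *\<^sub>R matrix_inv S))"
  unfolding is_hessian_def
proof (intro exI conjI allI)
  have g': "\<And>y. (g has_derivative (\<lambda>h. (g y *\<^sub>R u y) \<bullet> h)) (at y)"
    using has_derivative_prod_gauss_density[OF assms(1)] by (simp add: g_def u_def)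
  then show "(g has_derivative (\<lambda>h. (g y *\<^sub>R u y) \<bullet> h)) (at y)" for y .
  have "((\<lambda>y. \<Sum>n\<in>A. x n - y) has_derivative (\<lambda>h. \<Sum>n\<in>A. - h)) (at y)"
    by (intro has_derivative_sum) (auto intro!: derivative_eq_intros)
  then have "((\<lambda>y. \<Sum>n\<in>A. x n - y) has_derivative (\<lambda>h. - (real (card A) *\<^sub>R h))) (at y)"
    by (simp only: sum_negf sum_constant_scaleR)
  from bounded_linear.has_derivative[OF matrix_vector_mul_bounded_linear this]
  have "(u has_derivative (\<lambda>h. - real (card A) *\<^sub>R (matrix_inv S *v h))) (at y)"
    unfolding u_def by (simp add: vec.neg matrix_vector_mult_scaleR)
  from has_derivative_scaleR[OF g'[unfolded inner_scaleR_left] this]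
  show "((\<lambda>y. g y *\<^sub>R u y) has_derivative
      (\<lambda>h. (g y *\<^sub>R (outer (u y) (u y) - real (card A) *\<^sub>R matrix_inv S)) *v h)) (at y)"
    by (simp add: scaleR_matrix_vector_assoc[symmetric] matrix_vector_mult_diff_rdistrib
        outer_mult_vector algebra_simps)
qed

theorem mainTheorem6:
  fixes N :: nat and x :: "nat \<Rightarrow> real^'m" and w :: "nat \<Rightarrow> real"
    and S :: "real^'m^'m" and mu :: "real^'m"
  assumes "\<And>k. k \<in> {1..N} \<Longrightarrow> w k \<ge> 0"
    and "spd S"
    and "\<And>k. k \<in> {1..N} \<Longrightarrow>
           psd (S - (1 / real (N - k + 1)) *\<^sub>R outer (vsum N x k mu) (vsum N x k mu))"
  shows "\<exists>H. is_hessian (negloglik N x w S) mu H \<and> psd H"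
proof -
  define P where "P = matrix_inv S"
  define g where "g k y = (\<Prod>n=k..N. gauss_density (x n) y S)" for k y
  define u where "u k = P *v vsum N x k mu" for k
  define H where "H k = g k mu *\<^sub>R (outer (u k) (u k) - real (card {k..N}) *\<^sub>R P)" for k
  have "is_hessian (g k) mu (H k)" for k
    unfolding g_def H_def u_def P_def vsum_def
    by (rule is_hessian_prod_gauss_density[OF spd_matrix_inv(2)[OF assms(2)]])
  then have "is_hessian (\<lambda>y. - (\<Sum>k=1..N. w k * g k y)) mu (- (\<Sum>k=1..N. w k *\<^sub>R H k))"
    by (intro is_hessian_uminus is_hessian_sum is_hessian_scale)
  moreover have "negloglik N x w S = (\<lambda>y. - (\<Sum>k=1..N. w k * g k y))"
    unfolding negloglik_def g_def ..
  moreover have "psd (- (\<Sum>k=1..N. w k *\<^sub>R H k))"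
  proof -
    have "psd ((w k * g k mu) *\<^sub>R (real (card {k..N}) *\<^sub>R P - outer (u k) (u k)))"
      if "k \<in> {1..N}" for k
      using that assms psd_inverse_minus_outer[OF assms(2) assms(3)]
      by (intro psd_scaleR) (auto simp: g_def u_def P_def prod_nonneg gauss_density_def Suc_diff_le)
    then have "psd (\<Sum>k=1..N. (w k * g k mu) *\<^sub>R (real (card {k..N}) *\<^sub>R P - outer (u k) (u k)))"
      by (rule psd_sum)
    then show ?thesis
      by (simp add: H_def sum_negf[symmetric] algebra_simps)
  qed
  ultimately show ?thesis by auto
qed

end
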